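(* Let $\Sigma$ be a topological Markov chain with shift $\sigma$ and $\mu$ a Gibbs measure on $\Sigma$ for a H\"older continuous potential (as in the context). Let $\{l_n\}$ be a sequence of natural numbers with $l_n\to\infty$. Then there exists a sequence of cylinders $\{C_n\}$, $C_n$ defined on an interval $\Lambda_n$, with $\sum_n\mu(C_n)=\infty$, such that the sequence $\{\Lambda_n\}$ is $\{l_n\}$-centered and $\{C_n\}$ does not satisfy condition (SP). Likewise, there exists such a sequence of cylinders with $\sum_n\mu(C_n)=\infty$ defined on an $\{l_n\}$-aligned sequence of intervals which does not satisfy (SP).
   Context: Let $M\ge2$ and $\mathbf A$ an $M\times M$ zero-one matrix with $\mathbf A^K$ entrywise positive for some $K\ge1$; $\Sigma=\{\underline\omega\in\{1,\dots,M\}^{\mathbb Z}:\mathbf A_{\omega_i\omega_{i+1}}=1\ \forall i\}$ with product topology and left shift $(\sigma\underline\omega)_i=\omega_{i+1}$; $\mu$ is the unique $\sigma$-invariant Gibbs measure of a H\"older continuous function on $\Sigma$ (H\"older w.r.t. $d_a(\underline\omega,\underline\omega')=a^n$, $n=\max\{n:\omega_i=\omega_i'\ \forall|i|<n\}$). A cylinder defined on $\Lambda=[n^-,n^+]\subset\mathbb Z$ is $\{\underline\omega'\in\Sigma:\omega_i'=\omega_i,\ n^-\le i\le n^+\}$ for fixed symbols $\omega_i$. A sequence of intervals $\{\Lambda_n\}$ is $\{l_n\}$-centered if the center $(n^-+n^+)/2$ of $\Lambda_n$ lies in $[-l_n/2,l_n/2]$ for all $n$, and $\{l_n\}$-aligned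 if the left endpoint of $\Lambda_n$ lies in $[0,l_n]$ for all $n$. For sets $A_n$ let $R_{mn}=\mu(\sigma^{-m}A_m\cap\sigma^{-n}A_n)-\mu(A_m)\mu(A_n)$; condition (SP) means: there is $C>0$ with $\sum_{m,n=M'}^NR_{mn}\le C\sum_{n=M'}^N\mu(A_n)$ for all $N\ge M'\ge1$. *)

theory Defs
  imports "HOL-Probability.Probability"
begin

text \<open>Symbols are the naturals 1..M; points of the full lshift are maps int => nat.\<close>

type_synonym seq = "int \<Rightarrow> nat"

fun mat_pow :: "nat \<Rightarrow> (nat \<Rightarrow> nat \<Rightarrow> nat) \<Rightarrow> nat \<Rightarrow> nat \<Rightarrow> nat \<Rightarrow> nat" where
  "mat_pow M A 0 i j = (if i = j then 1 else 0)"
| "mat_pow M A (Suc k) i j = (\<Sum>l\<in>{1..M}. mat_pow M A k i l * A l j)"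

definition zero_one_matrix :: "nat \<Rightarrow> (nat \<Rightarrow> nat \<Rightarrow> nat) \<Rightarrow> bool" where
  "zero_one_matrix M A \<longleftrightarrow> (\<forall>i\<in>{1..M}. \<forall>j\<in>{1..M}. A i j = 0 \<or> A i j = 1)"

definition primitive_matrix :: "nat \<Rightarrow> (nat \<Rightarrow> nat \<Rightarrow> nat) \<Rightarrow> bool" where
  "primitive_matrix M A \<longleftrightarrow> (\<exists>K\<ge>1. \<forall>i\<in>{1..M}. \<forall>j\<in>{1..M}. mat_pow M A K i j > 0)"

definition TMC :: "nat \<Rightarrow> (nat \<Rightarrow> nat \<Rightarrow> nat) \<Rightarrow> seq set" where
  "TMC M A = {\<omega>. (\<forall>i. \<omega> i \<in> {1..M}) \<and> (\<forall>i. A (\<omega> i) (\<omega> (i + 1)) = 1)}"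

definition lshift :: "seq \<Rightarrow> seq" where
  "lshift \<omega> = (\<lambda>i. \<omega> (i + 1))"

text \<open>Product sigma algebra (= Borel sigma algebra of the product topology) on {1..M}^Z.\<close>
definition full_shift_space :: "nat \<Rightarrow> seq measure" where
  "full_shift_space M = PiM UNIV (\<lambda>_::int. count_space {1..M})"

text \<open>Hoelder continuity w.r.t. d_a(w,w') = a^n, n = max{n : w_i = w'_i for |i| < n}
  (unfolded: agreement on |i| < n gives |phi w - phi w'| <= C a^n).\<close>
definition hoelder_on :: "seq set \<Rightarrow> (seq \<Rightarrow> real) \<Rightarrow> bool" where
  "hoelder_on S \<phi> \<longleftrightarrow> (\<exists>a C. 0 < a \<and> a < 1 \<and> 0 < C \<and>
     (\<forall>\<omega>\<in>S. \<forall>\<omega>'\<in>S. \<forall>n::nat. (\<forall>i. \<bar>i\<bar> < int n \<longrightarrow> \<omega> i = \<omega>' i) \<longrightarrow>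
        \<bar>\<phi> \<omega> - \<phi> \<omega>'\<bar> \<le> C * a ^ n))"

definition cylinder :: "seq set \<Rightarrow> int \<Rightarrow> int \<Rightarrow> seq \<Rightarrow> seq set" where
  "cylinder S lo hi w = {\<omega>'\<in>S. \<forall>i. lo \<le> i \<and> i \<le> hi \<longrightarrow> \<omega>' i = w i}"

definition gibbs_measure :: "nat \<Rightarrow> (nat \<Rightarrow> nat \<Rightarrow> nat) \<Rightarrow> (seq \<Rightarrow> real) \<Rightarrow> seq measure \<Rightarrow> bool" where
  "gibbs_measure M A \<phi> \<mu> \<longleftrightarrow>
     prob_space \<mu> \<and> sets \<mu> = sets (full_shift_space M) \<and>
     emeasure \<mu> (TMC M A) = 1 \<and>
     lshift \<in> measurable \<mu> \<mu> \<and> distr \<mu> \<mu> lshift = \<mu> \<and>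
     (\<exists>P c1 c2. 0 < c1 \<and> 0 < c2 \<and>
        (\<forall>\<omega>\<in>TMC M A. \<forall>n::nat. n \<ge> 1 \<longrightarrow>
           c1 * exp (- real n * P + (\<Sum>k<n. \<phi> ((lshift ^^ k) \<omega>)))
             \<le> measure \<mu> (cylinder (TMC M A) 0 (int n - 1) \<omega>) \<and>
           measure \<mu> (cylinder (TMC M A) 0 (int n - 1) \<omega>)
             \<le> c2 * exp (- real n * P + (\<Sum>k<n. \<phi> ((lshift ^^ k) \<omega>)))))"

definition Rcorr :: "seq measure \<Rightarrow> (nat \<Rightarrow> seq set) \<Rightarrow> nat \<Rightarrow> nat \<Rightarrow> real" where
  "Rcorr \<mu> C m n = measure \<mu> ((lshift ^^ m) -` C m \<inter> (lshift ^^ n) -` C n)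
                    - measure \<mu> (C m) * measure \<mu> (C n)"

definition SP :: "seq measure \<Rightarrow> (nat \<Rightarrow> seq set) \<Rightarrow> bool" where
  "SP \<mu> C \<longleftrightarrow> (\<exists>c>0. \<forall>M' N. 1 \<le> M' \<and> M' \<le> N \<longrightarrow>
      (\<Sum>m=M'..N. \<Sum>n=M'..N. Rcorr \<mu> C m n) \<le> c * (\<Sum>n=M'..N. measure \<mu> (C n)))"

definition centered_seq :: "(nat \<Rightarrow> nat) \<Rightarrow> (nat \<Rightarrow> int) \<Rightarrow> (nat \<Rightarrow> int) \<Rightarrow> bool" where
  "centered_seq l lo hi \<longleftrightarrow> (\<forall>n\<ge>1.
     - real (l n) / 2 \<le> real_of_int (lo n + hi n) / 2 \<and> real_of_int (lo n + hi n) / 2 \<le> real (l n) / 2)"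

definition aligned_seq :: "(nat \<Rightarrow> nat) \<Rightarrow> (nat \<Rightarrow> int) \<Rightarrow> bool" where
  "aligned_seq l lo \<longleftrightarrow> (\<forall>n\<ge>1. 0 \<le> lo n \<and> lo n \<le> int (l n))"

end

theory Submission
  imports Defs
begin

(* Take C_n to be the one-site cylinder {omega_(j_n) = 1} at a position 0 <= j_n <= l_n / 2, so that
   the intervals [j_n, j_n] are both l-centered and l-aligned, and mu(C_n) = p := mu[1] lies in (0, 1)
   by shift invariance and the Gibbs lower bound; hence sum mu(C_n) = infinity.  The positions are
   chosen so that n + j_n is constant along blocks n1 <= n <= n1 + W of arbitrary length: on such a
   block all sets sigma^(-n) C_n coincide, so the correlation sum is (W+1)^2 (p - p^2) while the
   measure sum is only (W+1) p, contradicting (SP) as W grows.  Since l_n need not be monotone, the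
   blocks are built from its running tail minimum. *)

lemma space_full_shift_space: "space (full_shift_space M) = {\<omega>. \<forall>i. \<omega> i \<in> {1..M}}"
  by (auto simp: full_shift_space_def space_PiM PiE_iff)

lemma measurable_component_full_shift_space [measurable]:
  "(\<lambda>\<omega>. \<omega> i) \<in> measurable (full_shift_space M) (count_space UNIV)"
  unfolding full_shift_space_def
  by (rule measurable_compose[OF measurable_component_singleton]) auto

lemma TMC_subset_space: "TMC M A \<subseteq> space (full_shift_space M)"
  by (auto simp: TMC_def space_full_shift_space)

lemma sets_TMC: "TMC M A \<in> sets (full_shift_space M)"
proof -
  have "TMC M A = (\<Inter>i. {\<omega> \<in> space (full_shift_space M). A (\<omega> i) (\<omega> (i + 1)) = 1})"
    by (auto simp: TMC_def space_full_shift_space)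
  also have "\<dots> \<in> sets (full_shift_space M)"
    by measurable
  finally show ?thesis .
qed

lemma sets_site_cylinder: "cylinder (TMC M A) k k w \<in> sets (full_shift_space M)"
proof -
  have "cylinder (TMC M A) k k w = TMC M A \<inter> {\<omega> \<in> space (full_shift_space M). \<omega> k = w k}"
    using TMC_subset_space by (auto simp: cylinder_def)
  also have "\<dots> \<in> sets (full_shift_space M)"
    using sets_TMC by measurable
  finally show ?thesis .
qed

lemma funpow_lshift: "(lshift ^^ n) \<omega> = (\<lambda>i. \<omega> (i + int n))"
  by (induction n arbitrary: \<omega>) (auto simp: lshift_def add_ac)

lemma translate_TMC_iff: "(\<lambda>i. \<omega> (i + m)) \<in> TMC M A \<longleftrightarrow> \<omega> \<in> TMC M A"
proof -
  have TMC_translate: "(\<lambda>i. \<omega> (i + m)) \<in> TMC M A" if "\<omega> \<in> TMC M A" for \<omega> :: seq and m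
    using that unfolding TMC_def by simp (metis add.assoc add.commute)
  show ?thesis
    using TMC_translate[of "\<lambda>i. \<omega> (i + m)" "- m"] TMC_translate[of \<omega> m] by auto
qed

lemma vimage_funpow_lshift_site_cylinder:
  "(lshift ^^ n) -` cylinder (TMC M A) k k w = cylinder (TMC M A) (k + int n) (k + int n) (\<lambda>_. w k)"
  by (auto simp: cylinder_def funpow_lshift translate_TMC_iff)

lemma walk_of_mat_pow_pos:
  assumes "mat_pow M A k i j > 0"
  shows "\<exists>p. p 0 = i \<and> p k = j \<and> (\<forall>t<k. A (p t) (p (Suc t)) > 0) \<and>
    (\<forall>t. 0 < t \<and> t < k \<longrightarrow> p t \<in> {1..M})"
  using assms
proof (induction k arbitrary: j)
  case 0
  then show ?case by (intro exI[of _ "\<lambda>_. i"]) (auto split: if_splits)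
next
  case (Suc k)
  then have "(\<Sum>l\<in>{1..M}. mat_pow M A k i l * A l j) \<noteq> 0"
    by (simp only: mat_pow.simps neq0_conv)
  then obtain l where "l \<in> {1..M}" "mat_pow M A k i l * A l j \<noteq> 0"
    using sum.not_neutral_contains_not_neutral by blast
  then have l: "l \<in> {1..M}" "mat_pow M A k i l > 0" "A l j > 0" by auto
  from Suc.IH[OF l(2)] obtain p where p: "p 0 = i" "p k = l" "\<forall>t<k. A (p t) (p (Suc t)) > 0"
    "\<forall>t. 0 < t \<and> t < k \<longrightarrow> p t \<in> {1..M}" by blast
  show ?case
    using p l by (intro exI[of _ "p(Suc k := j)"]) (auto simp: less_Suc_eq)
qed

lemma TMC_hits_every_symbol:
  assumes zero_one: "zero_one_matrix M A" and "primitive_matrix M A" and b: "b \<in> {1..M}"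
  obtains \<omega> where "\<omega> \<in> TMC M A" "\<omega> 0 = b"
proof -
  obtain K where K: "K \<ge> 1" "mat_pow M A K b b > 0"
    using assms unfolding primitive_matrix_def by blast
  then obtain p where p: "p 0 = b" "p K = b" "\<forall>t<K. A (p t) (p (Suc t)) > 0"
    "\<forall>t. 0 < t \<and> t < K \<longrightarrow> p t \<in> {1..M}"
    using walk_of_mat_pow_pos[OF K(2)] by blast
  define P where "P t = p (t mod K)" for t
  have P_range: "P t \<in> {1..M}" for t
    using p b K mod_less_divisor[of K t] unfolding P_def by (cases "t mod K = 0") auto
  have P_step: "A (P t) (P (Suc t)) = 1" for t
  proof -
    have "P (Suc t) = p (Suc (t mod K))"
      using p unfolding P_def by (simp add: mod_Suc)
    then have "A (P t) (P (Suc t)) > 0"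
      using p K unfolding P_def by simp
    moreover have "A (P t) (P (Suc t)) = 0 \<or> A (P t) (P (Suc t)) = 1"
      using zero_one P_range unfolding zero_one_matrix_def by blast
    ultimately show ?thesis by simp
  qed
  define \<omega> where "\<omega> t = P (nat (t mod int K))" for t
  have "nat ((t + 1) mod int K) = Suc (nat (t mod int K)) mod K" for t
  proof -
    have "(t + 1) mod int K = (t mod int K + 1) mod int K"
      by (simp add: mod_add_left_eq)
    then show ?thesis
      using K by (simp add: nat_mod_distrib nat_add_distrib)
  qed
  then have "\<omega> (t + 1) = P (Suc (nat (t mod int K)))" for t
    unfolding \<omega>_def P_def by simp
  then have "\<omega> \<in> TMC M A"
    using P_range P_step unfolding TMC_def \<omega>_def by simp
  moreover have "\<omega> 0 = b"
    using p by (simp add: \<omega>_def P_def)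
  ultimately show ?thesis by (rule that)
qed

lemma measure_funpow_vimage:
  assumes f: "f \<in> measurable \<mu> \<mu>" and invariant: "distr \<mu> \<mu> f = \<mu>" and S: "S \<in> sets \<mu>"
  shows "measure \<mu> ((f ^^ n) -` S \<inter> space \<mu>) = measure \<mu> S"
proof (induction n)
  case (Suc n)
  define T where "T = (f ^^ n) -` S \<inter> space \<mu>"
  have "T \<in> sets \<mu>"
    unfolding T_def using measurable_compose_n[OF f] S by measurable
  have "(f ^^ Suc n) -` S \<inter> space \<mu> = f -` T \<inter> space \<mu>"
    unfolding T_def using measurable_space[OF f]
    by (auto simp del: funpow.simps simp: funpow_Suc_right)
  also have "measure \<mu> \<dots> = measure (distr \<mu> \<mu> f) T"
    using measure_distr[OF f \<open>T \<in> sets \<mu>\<close>] by simp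
  also have "\<dots> = measure \<mu> S"
    using Suc.IH invariant unfolding T_def by simp
  finally show ?case .
qed (use S in \<open>simp add: Int_absorb2 sets.sets_into_space\<close>)

lemma gibbs_measure_site_cylinder_translate:
  assumes "gibbs_measure M A \<phi> \<mu>"
  shows "measure \<mu> (cylinder (TMC M A) k k (\<lambda>_. b)) = measure \<mu> (cylinder (TMC M A) 0 0 (\<lambda>_. b))"
proof -
  have sets: "sets \<mu> = sets (full_shift_space M)"
    using assms unfolding gibbs_measure_def by blast
  have subset: "cylinder (TMC M A) i i (\<lambda>_. b) \<subseteq> space \<mu>" for i
    using TMC_subset_space sets_eq_imp_space_eq[OF sets] unfolding cylinder_def by blast
  have translate: "measure \<mu> (cylinder (TMC M A) (i + int n) (i + int n) (\<lambda>_. b))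
      = measure \<mu> (cylinder (TMC M A) i i (\<lambda>_. b))" for i n
    using measure_funpow_vimage[of lshift \<mu> "cylinder (TMC M A) i i (\<lambda>_. b)" n] assms
      sets_site_cylinder[of M A i "\<lambda>_. b"] sets
    by (simp add: gibbs_measure_def vimage_funpow_lshift_site_cylinder Int_absorb2 subset)
  show ?thesis
    using translate[of 0 "nat k"] translate[of k "nat (- k)"] by (cases "k \<ge> 0") auto
qed

lemma gibbs_measure_site_cylinder_pos:
  assumes "zero_one_matrix M A" "primitive_matrix M A" "gibbs_measure M A \<phi> \<mu>" "b \<in> {1..M}"
  shows "0 < measure \<mu> (cylinder (TMC M A) 0 0 (\<lambda>_. b))"
proof -
  obtain \<omega> where \<omega>: "\<omega> \<in> TMC M A" "\<omega> 0 = b"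
    using TMC_hits_every_symbol[OF assms(1,2,4)] by blast
  from assms(3) obtain P c1 where "0 < c1" and
    lower: "\<forall>\<omega>\<in>TMC M A. \<forall>n::nat. n \<ge> 1 \<longrightarrow>
      c1 * exp (- real n * P + (\<Sum>k<n. \<phi> ((lshift ^^ k) \<omega>)))
        \<le> measure \<mu> (cylinder (TMC M A) 0 (int n - 1) \<omega>)"
    unfolding gibbs_measure_def by blast
  have "0 < c1 * exp (- P + \<phi> \<omega>)"
    using \<open>0 < c1\<close> by simp
  also have "\<dots> \<le> measure \<mu> (cylinder (TMC M A) 0 0 \<omega>)"
    using lower[rule_format, OF \<omega>(1), of 1] by simp
  also have "cylinder (TMC M A) 0 0 \<omega> = cylinder (TMC M A) 0 0 (\<lambda>_. b)"
    using \<omega>(2) unfolding cylinder_def by auto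
  finally show ?thesis .
qed

lemma gibbs_measure_site_cylinder_less_1:
  assumes "M \<ge> 2" "zero_one_matrix M A" "primitive_matrix M A" "gibbs_measure M A \<phi> \<mu>"
    and b: "b \<in> {1..M}"
  shows "measure \<mu> (cylinder (TMC M A) 0 0 (\<lambda>_. b)) < 1"
proof -
  interpret prob_space \<mu>
    using assms(4) unfolding gibbs_measure_def by blast
  have sets: "sets \<mu> = sets (full_shift_space M)"
    using assms(4) unfolding gibbs_measure_def by blast
  define b' where "b' = (if b = 1 then 2 else 1 :: nat)"
  have "b' \<in> {1..M}" "b' \<noteq> b"
    using assms(1) b unfolding b'_def by auto
  let ?Cb = "cylinder (TMC M A) 0 0 (\<lambda>_. b)" and ?Cb' = "cylinder (TMC M A) 0 0 (\<lambda>_. b')"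
  have "measure \<mu> ?Cb + measure \<mu> ?Cb' = measure \<mu> (?Cb \<union> ?Cb')"
    using \<open>b' \<noteq> b\<close> sets_site_cylinder sets
    by (intro finite_measure_Union[symmetric]) (auto simp: cylinder_def)
  also have "\<dots> \<le> 1"
    by (rule prob_le_1)
  finally show ?thesis
    using gibbs_measure_site_cylinder_pos[OF assms(2-4) \<open>b' \<in> {1..M}\<close>] by linarith
qed

lemma not_SP_if_long_blocks_of_equal_preimages:
  assumes measure_C: "\<And>n. measure \<mu> (C n) = p" and p: "0 < p" "p < 1"
    and blocks: "\<And>W. \<exists>n1\<ge>1. \<exists>G. measure \<mu> G = p \<and> (\<forall>m\<in>{n1..n1+W}. (lshift ^^ m) -` C m = G)"
  shows "\<not> SP \<mu> C"
proof
  assume "SP \<mu> C"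
  then obtain c where SP_bound: "\<And>M' N. 1 \<le> M' \<Longrightarrow> M' \<le> N \<Longrightarrow>
      (\<Sum>m=M'..N. \<Sum>n=M'..N. Rcorr \<mu> C m n) \<le> c * (\<Sum>n=M'..N. measure \<mu> (C n))"
    unfolding SP_def by blast
  obtain W :: nat where W: "c / (1 - p) < W"
    using reals_Archimedean2 by blast
  obtain n1 G where n1: "1 \<le> n1" and G: "measure \<mu> G = p"
    and preimages: "\<And>m. m \<in> {n1..n1+W} \<Longrightarrow> (lshift ^^ m) -` C m = G"
    using blocks[of W] by blast
  have "Rcorr \<mu> C m n = p - p * p" if "m \<in> {n1..n1+W}" "n \<in> {n1..n1+W}" for m n
    unfolding Rcorr_def preimages[OF that(1)] preimages[OF that(2)] measure_C G Int_absorb ..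
  then have "(\<Sum>m=n1..n1+W. \<Sum>n=n1..n1+W. Rcorr \<mu> C m n) = (\<Sum>m=n1..n1+W. \<Sum>n=n1..n1+W. p - p * p)"
    by (intro sum.cong refl)
  also have "\<dots> = (W + 1) * ((W + 1) * (p - p * p))"
    by (simp add: add.commute)
  finally have "(W + 1) * ((W + 1) * (p - p * p)) \<le> c * ((W + 1) * p)"
    using SP_bound[OF n1, of "n1 + W"] measure_C by (simp add: add.commute)
  then have "((W + 1) * p) * ((W + 1) * (1 - p)) \<le> ((W + 1) * p) * c"
    by (simp add: algebra_simps)
  then have "(W + 1) * (1 - p) \<le> c"
    using p by (simp add: mult_le_cancel_left_pos)
  moreover have "c < W * (1 - p)"
    using W p by (simp add: pos_divide_less_eq)
  ultimately show False
    using p by (simp add: algebra_simps)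
qed

definition tail_min :: "(nat \<Rightarrow> nat) \<Rightarrow> nat \<Rightarrow> nat" where
  "tail_min l n = (INF k\<in>{n..}. l k)"

lemma tail_min_le: "tail_min l n \<le> l n"
  unfolding tail_min_def by (rule cINF_lower) auto

lemma mono_tail_min: "mono (tail_min l)"
  unfolding tail_min_def by (intro monoI cINF_superset_mono) auto

lemma filterlim_tail_min:
  assumes "filterlim l at_top sequentially"
  shows "filterlim (tail_min l) at_top sequentially"
  unfolding filterlim_at_top
proof
  fix Z
  obtain N where "\<And>n. n \<ge> N \<Longrightarrow> Z \<le> l n"
    using assms unfolding filterlim_at_top eventually_sequentially by blast
  then have "Z \<le> tail_min l n" if "n \<ge> N" for n
    using that unfolding tail_min_def by (intro cINF_greatest) auto
  then show "eventually (\<lambda>n. Z \<le> tail_min l n) sequentially"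
    unfolding eventually_sequentially by blast
qed

(* plateau_seq D n - n counts down to 0 and then restarts at D n, so plateau_seq D is constant on
   [n1, n1 + D n1] after every restart n1. *)
primrec plateau_seq :: "(nat \<Rightarrow> nat) \<Rightarrow> nat \<Rightarrow> nat" where
  "plateau_seq D 0 = D 0"
| "plateau_seq D (Suc n) = (if Suc n \<le> plateau_seq D n then plateau_seq D n else Suc n + D (Suc n))"

lemma le_plateau_seq: "n \<le> plateau_seq D n"
  by (induction n) auto

lemma plateau_seq_le:
  assumes "mono D"
  shows "plateau_seq D n \<le> n + D n"
proof (induction n)
  case (Suc n)
  then show ?case
    using monoD[OF assms, of n "Suc n"] by auto
qed simp

lemma plateau_seq_restarts: "\<exists>n1>n. plateau_seq D n1 = n1 + D n1"
proof (induction "plateau_seq D n - n" arbitrary: n rule: less_induct)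
  case less
  show ?case
  proof (cases "Suc n \<le> plateau_seq D n")
    case True
    then have "plateau_seq D (Suc n) - Suc n < plateau_seq D n - n"
      by simp
    from less[OF this] obtain n1 where "n1 > Suc n" "plateau_seq D n1 = n1 + D n1"
      by blast
    then show ?thesis
      by (intro exI[of _ n1]) simp
  next
    case False
    then show ?thesis
      by (intro exI[of _ "Suc n"]) simp
  qed
qed

lemma plateau_seq_const_after_restart:
  assumes "plateau_seq D n1 = n1 + D n1" "n1 \<le> m" "m \<le> n1 + D n1"
  shows "plateau_seq D m = plateau_seq D n1"
  using assms(2,3)
proof (induction m rule: dec_induct)
  case (step m)
  then show ?case
    using assms(1) by simp
qed simp

lemma plateau_seq_long_plateaus:
  assumes "filterlim D at_top sequentially"
  shows "\<exists>n1\<ge>1. \<forall>m\<in>{n1..n1+W}. plateau_seq D m = plateau_seq D n1"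
proof -
  have "eventually (\<lambda>n. W \<le> D n) sequentially"
    using assms by (simp add: filterlim_at_top)
  then obtain N where N: "\<And>n. n \<ge> N \<Longrightarrow> W \<le> D n"
    unfolding eventually_sequentially by blast
  obtain n1 where n1: "n1 > N" "plateau_seq D n1 = n1 + D n1"
    using plateau_seq_restarts[of N D] by blast
  have "W \<le> D n1"
    using N n1(1) by simp
  then have "\<forall>m\<in>{n1..n1+W}. plateau_seq D m = plateau_seq D n1"
    by (auto intro: plateau_seq_const_after_restart[OF n1(2)])
  moreover have "n1 \<ge> 1"
    using n1(1) by simp
  ultimately show ?thesis
    by blast
qed

lemma positions_with_long_plateaus:
  assumes "filterlim l at_top sequentially"
  obtains j :: "nat \<Rightarrow> int" where "\<And>n. 0 \<le> j n" "\<And>n. 2 * j n \<le> int (l n)"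
    "\<And>W. \<exists>n1\<ge>1. \<forall>m\<in>{n1..n1+W}. int m + j m = int n1 + j n1"
proof
  define D where "D n = tail_min l n div 2" for n
  have "mono D"
    using mono_tail_min unfolding D_def mono_def by (simp add: div_le_mono)
  have "filterlim D at_top sequentially"
    unfolding filterlim_at_top
  proof
    fix Z
    have "eventually (\<lambda>n. 2 * Z \<le> tail_min l n) sequentially"
      using filterlim_tail_min[OF assms] unfolding filterlim_at_top by blast
    then show "eventually (\<lambda>n. Z \<le> D n) sequentially"
      unfolding D_def by (rule eventually_mono) linarith
  qed
  define j where "j n = int (plateau_seq D n) - int n" for n
  have D_le: "2 * D n \<le> l n" for n
    using tail_min_le[of l n] unfolding D_def by linarith
  show "0 \<le> j n" "2 * j n \<le> int (l n)" for n
    using le_plateau_seq[of n D] plateau_seq_le[OF \<open>mono D\<close>, of n] D_le[of n]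
    unfolding j_def by simp_all
  show "\<exists>n1\<ge>1. \<forall>m\<in>{n1..n1+W}. int m + j m = int n1 + j n1" for W
    using plateau_seq_long_plateaus[OF \<open>filterlim D at_top sequentially\<close>, of W]
    unfolding j_def by auto
qed

lemma centered_seq_singletons:
  assumes "\<And>n. 0 \<le> j n" "\<And>n. 2 * j n \<le> int (l n)"
  shows "centered_seq l j j"
  unfolding centered_seq_def
proof (intro allI impI conjI)
  fix n :: nat
  have "0 \<le> real_of_int (j n)" "real_of_int (2 * j n) \<le> real (l n)"
    using assms by (metis of_int_0_le_iff, metis of_int_le_iff of_int_of_nat_eq)
  then show "- real (l n) / 2 \<le> real_of_int (j n + j n) / 2"
    "real_of_int (j n + j n) / 2 \<le> real (l n) / 2"
    by simp_all
qed

lemma aligned_seq_singletons: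
  assumes "\<And>n. 0 \<le> j n" "\<And>n. 2 * j n \<le> int (l n)"
  shows "aligned_seq l j"
  unfolding aligned_seq_def using assms by (smt (verit))

lemma gibbs_measure_site_cylinders_diverge:
  assumes "zero_one_matrix M A" "primitive_matrix M A" "gibbs_measure M A \<phi> \<mu>" "b \<in> {1..M}"
  shows "(\<Sum>n. emeasure \<mu> (cylinder (TMC M A) (j n) (j n) (\<lambda>_. b))) = \<infinity>"
proof -
  interpret prob_space \<mu>
    using assms(3) unfolding gibbs_measure_def by blast
  define p where "p = measure \<mu> (cylinder (TMC M A) 0 0 (\<lambda>_. b))"
  have "0 < p"
    unfolding p_def by (rule gibbs_measure_site_cylinder_pos[OF assms])
  have "measure \<mu> (cylinder (TMC M A) k k (\<lambda>_. b)) = p" for k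
    unfolding p_def by (rule gibbs_measure_site_cylinder_translate[OF assms(3)])
  then have "(\<lambda>n. emeasure \<mu> (cylinder (TMC M A) (j n) (j n) (\<lambda>_. b))) = (\<lambda>_. ennreal p)"
    by (simp add: emeasure_eq_measure)
  moreover have "(\<Sum>n. ennreal p) = top"
    by (rule summable_iff_suminf_neq_top) (use \<open>0 < p\<close> in \<open>auto simp: summable_const_iff\<close>)
  ultimately show ?thesis
    by simp
qed

lemma gibbs_measure_site_cylinders_not_SP:
  assumes "M \<ge> 2" "zero_one_matrix M A" "primitive_matrix M A" "gibbs_measure M A \<phi> \<mu>"
    and b: "b \<in> {1..M}"
    and plateaus: "\<And>W. \<exists>n1\<ge>1. \<forall>m\<in>{n1..n1+W}. int m + j m = int n1 + j n1"
  shows "\<not> SP \<mu> (\<lambda>n. cylinder (TMC M A) (j n) (j n) (\<lambda>_. b))"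
proof -
  define p where "p = measure \<mu> (cylinder (TMC M A) 0 0 (\<lambda>_. b))"
  define C where "C n = cylinder (TMC M A) (j n) (j n) (\<lambda>_. b)" for n
  have p: "0 < p" "p < 1"
    using gibbs_measure_site_cylinder_pos[OF assms(2-5)]
      gibbs_measure_site_cylinder_less_1[OF assms(1-5)] unfolding p_def by auto
  have measure_translate: "measure \<mu> (cylinder (TMC M A) k k (\<lambda>_. b)) = p" for k
    unfolding p_def by (rule gibbs_measure_site_cylinder_translate[OF assms(4)])
  have "\<not> SP \<mu> C"
  proof (rule not_SP_if_long_blocks_of_equal_preimages[OF _ p])
    show "measure \<mu> (C n) = p" for n
      unfolding C_def by (rule measure_translate)
    fix W
    obtain n1 where "n1 \<ge> 1" and n1: "\<And>m. m \<in> {n1..n1+W} \<Longrightarrow> int m + j m = int n1 + j n1"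
      using plateaus[of W] by blast
    let ?G = "cylinder (TMC M A) (int n1 + j n1) (int n1 + j n1) (\<lambda>_. b)"
    have "(lshift ^^ m) -` C m = ?G" if "m \<in> {n1..n1+W}" for m
    proof -
      have "j m + int m = int n1 + j n1"
        using n1[OF that] by linarith
      then show ?thesis
        unfolding C_def vimage_funpow_lshift_site_cylinder by simp
    qed
    then show "\<exists>n1\<ge>1. \<exists>G. measure \<mu> G = p \<and> (\<forall>m\<in>{n1..n1+W}. (lshift ^^ m) -` C m = G)"
      using \<open>n1 \<ge> 1\<close> measure_translate by blast
  qed
  then show ?thesis
    unfolding C_def .
qed



theorem theorem2p2:
  fixes M :: nat and A :: "nat \<Rightarrow> nat \<Rightarrow> nat" and \<phi> :: "seq \<Rightarrow> real"
    and \<mu> :: "seq measure" and l :: "nat \<Rightarrow> nat"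
  assumes "M \<ge> 2"
    and "zero_one_matrix M A" and "primitive_matrix M A"
    and "hoelder_on (TMC M A) \<phi>"
    and "gibbs_measure M A \<phi> \<mu>"
    and "filterlim l at_top sequentially"
  shows "(\<exists>lo hi w. (\<forall>n\<ge>1. lo n \<le> hi n) \<and> centered_seq l lo hi \<and>
            (\<Sum>n. emeasure \<mu> (cylinder (TMC M A) (lo (Suc n)) (hi (Suc n)) (w (Suc n)))) = \<infinity> \<and>
            \<not> SP \<mu> (\<lambda>n. cylinder (TMC M A) (lo n) (hi n) (w n)))
       \<and> (\<exists>lo hi w. (\<forall>n\<ge>1. lo n \<le> hi n) \<and> aligned_seq l lo \<and>
            (\<Sum>n. emeasure \<mu> (cylinder (TMC M A) (lo (Suc n)) (hi (Suc n)) (w (Suc n)))) = \<infinity> \<and>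
            \<not> SP \<mu> (\<lambda>n. cylinder (TMC M A) (lo n) (hi n) (w n)))"
proof -
  obtain j where j: "\<And>n. 0 \<le> j n" "\<And>n. 2 * j n \<le> int (l n)"
    and plateaus: "\<And>W. \<exists>n1\<ge>1. \<forall>m\<in>{n1..n1+W}. int m + j m = int n1 + j n1"
    using positions_with_long_plateaus[OF assms(6)] by blast
  have symbol: "(1::nat) \<in> {1..M}"
    using assms(1) by simp
  have "\<not> SP \<mu> (\<lambda>n. cylinder (TMC M A) (j n) (j n) (\<lambda>_. 1))"
    using gibbs_measure_site_cylinders_not_SP[OF assms(1,2,3,5) symbol plateaus] .
  moreover have "(\<Sum>n. emeasure \<mu> (cylinder (TMC M A) (j (Suc n)) (j (Suc n)) (\<lambda>_. 1))) = \<infinity>"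
    using gibbs_measure_site_cylinders_diverge[OF assms(2,3,5) symbol] .
  moreover have "centered_seq l j j" "aligned_seq l j"
    using centered_seq_singletons[OF j] aligned_seq_singletons[OF j] .
  ultimately show ?thesis
    by (intro conjI exI[of _ j] exI[of _ "\<lambda>_ _. 1"]) auto
qed

end
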